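(* Let $Y$ be a random variable whose moment generating function $E[e^{tY}]$ exists for $|t|<r_0$ for some $r_0>0$. Let $(Y_j)_{j\ge1}$ be mutually independent copies of $Y$, $S_0=0$, $S_k=Y_1+\cdots+Y_k$ for $k\ge1$. Let $r$ be a positive integer. Define $\phi_n^Y(x,y)$ and $\phi_{n,r}^Y(x,y)$ by $$\Big(1+y\big(E[e^{Yt}]-1\big)\Big)^{x}=\sum_{n=0}^{\infty}\phi_n^Y(x,y)\frac{t^n}{n!},\qquad \Big(1+y\big(E[e^{Yt}]-1\big)\Big)^{x}e^{rt}=\sum_{n=0}^{\infty}\phi_{n,r}^Y(x,y)\frac{t^n}{n!}.$$ Then for all integers $m,n\ge0$, $$\phi_{m+n,r}^Y(x,y)=\sum_{i=0}^{n}\sum_{k=0}^{m}\frac{1}{k!}\binom{n}{i}(x)_k y^k\phi_i^Y(x-k,y)\sum_{j=k}^{m}\binom{m}{j}\sum_{l_1+\cdots+l_k=j}\binom{j}{l_1,\dots,l_k}E\Big[(S_k+r)^{n-i}\prod_{p=1}^{k}Y_p^{l_p}\Big]r^{m-j},$$ where the innermost sum runs over $k$-tuples $(l_1,\dots,l_k)$ of positive integers with sum $j$.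
   Context: $(x)_0=1$, $(x)_k=x(x-1)\cdots(x-k+1)$ for $k\ge1$. The power $(1+u)^x$ is understood via the binomial series $\sum_{k\ge0}\binom{x}{k}u^k$ and the defining identities are ones of power series in $t$; $x,y$ are variables. For $k=0$ the sum over $(l_1,\dots,l_k)$ equals $1$ if $j=0$ and $0$ otherwise (empty product equal to $1$). $\binom{j}{l_1,\dots,l_k}$ is the multinomial coefficient. *)

theory Defs
  imports "HOL-Probability.Probability" "HOL-Computational_Algebra.Formal_Power_Series"
    "HOL-Library.FuncSet"
begin

definition falling_fact :: "nat \<Rightarrow> real \<Rightarrow> real" where
  "falling_fact k x = (\<Prod>i<k. (x - of_nat i))"

text \<open>Formal power series of the moment generating function E[e^{tY}] in t:
  its n-th coefficient is E[Y^n]/n!.\<close>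
definition mgf_fps :: "'a measure \<Rightarrow> ('a \<Rightarrow> real) \<Rightarrow> real fps" where
  "mgf_fps M Y = Abs_fps (\<lambda>n. (\<integral>\<omega>. (Y \<omega>) ^ n \<partial>M) / fact n)"

text \<open>The power series (1 + y (E[e^{tY}] - 1))^x, where (1+u)^x is the binomial
  series sum_k (x choose k) u^k (formal composition; u has zero constant term).\<close>
definition phi_fps :: "'a measure \<Rightarrow> ('a \<Rightarrow> real) \<Rightarrow> real \<Rightarrow> real \<Rightarrow> real fps" where
  "phi_fps M Y x y = fps_binomial x oo (fps_const y * (mgf_fps M Y - 1))"

definition phi :: "'a measure \<Rightarrow> ('a \<Rightarrow> real) \<Rightarrow> nat \<Rightarrow> real \<Rightarrow> real \<Rightarrow> real" where
  "phi M Y n x y = fact n * fps_nth (phi_fps M Y x y) n"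

definition phi_r :: "'a measure \<Rightarrow> ('a \<Rightarrow> real) \<Rightarrow> nat \<Rightarrow> nat \<Rightarrow> real \<Rightarrow> real \<Rightarrow> real" where
  "phi_r M Y r n x y = fact n * fps_nth (phi_fps M Y x y * fps_exp (of_nat r)) n"

definition comps :: "nat \<Rightarrow> nat \<Rightarrow> (nat \<Rightarrow> nat) set" where
  "comps k j = {l \<in> {1..k} \<rightarrow>\<^sub>E {1..j}. (\<Sum>p\<in>{1..k}. l p) = j}"

definition multinom :: "nat \<Rightarrow> nat \<Rightarrow> (nat \<Rightarrow> nat) \<Rightarrow> real" where
  "multinom j k l = fact j / (\<Prod>p\<in>{1..k}. fact (l p))"

end

theory Submission
  imports Defs
begin

(* Let F be the moment generating series of Y and P_x = (1 + y (F - 1))^x, so that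
   phi_r (m + n) is the n-th exponential coefficient of D^m (P_x e^{rt}), D = d/dt.
   Leibniz's rule reduces this to the derivatives D^j P_x, and an induction on j in the spirit
   of Faa di Bruno's formula gives D^j P_x = sum_k (x choose k) y^k P_{x-k} Q_{k,j}, where
   Q_{k,j} sums multinom(j; l) * prod_p D^{l_p} F over the compositions l of j into k positive
   parts. Finally e^{rt} prod_p D^{l_p} F is the exponential generating series, in c, of
   E[(S_k + r)^c prod_p Y_p^{l_p}]: this is where independence and equal distribution enter. *)

declare fps_nth_deriv.simps(2) [simp del] fps_nth_deriv_commute [simp]

definition egf_coeff :: "'a::semiring_char_0 fps \<Rightarrow> nat \<Rightarrow> 'a" where
  "egf_coeff f n = fact n * fps_nth f n"

lemma egf_coeff_sum: "egf_coeff (\<Sum>i\<in>I. f i) n = (\<Sum>i\<in>I. egf_coeff (f i) n)"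
  by (simp add: egf_coeff_def fps_sum_nth sum_distrib_left)

lemma egf_coeff_const_mult [simp]:
  fixes f :: "'a::{comm_semiring_1,semiring_char_0} fps"
  shows "egf_coeff (fps_const a * f) n = a * egf_coeff f n"
  by (simp add: egf_coeff_def mult.left_commute)

lemma egf_coeff_mult:
  fixes f g :: "'a::field_char_0 fps"
  shows "egf_coeff (f * g) n = (\<Sum>i\<le>n. of_nat (n choose i) * egf_coeff f i * egf_coeff g (n - i))"
  unfolding egf_coeff_def fps_mult_nth atLeast0AtMost sum_distrib_left
  by (rule sum.cong) (simp_all add: binomial_fact field_simps)

lemma egf_coeff_deriv:
  fixes f :: "'a::{comm_semiring_1,semiring_char_0} fps"
  shows "egf_coeff (fps_deriv f) n = egf_coeff f (Suc n)"
  by (simp add: egf_coeff_def algebra_simps)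

lemma egf_coeff_deriv_iterate:
  fixes f :: "'a::{comm_semiring_1,semiring_char_0} fps"
  shows "egf_coeff (fps_nth_deriv m f) n = egf_coeff f (n + m)"
  by (induction m arbitrary: n) (simp_all add: egf_coeff_deriv)

lemma egf_coeff_fps_exp [simp]: "egf_coeff (fps_exp (c::'a::field_char_0)) n = c ^ n"
  by (simp add: egf_coeff_def)

lemma egf_coeff_mgf_fps [simp]: "egf_coeff (mgf_fps M Y) n = (\<integral>\<omega>. Y \<omega> ^ n \<partial>M)"
  by (simp add: egf_coeff_def mgf_fps_def)

lemma egf_coeff_mult_deriv_mgf_fps:
  "egf_coeff (A * fps_nth_deriv L (mgf_fps M Y)) n =
    (\<Sum>a\<le>n. of_nat (n choose a) * egf_coeff A a * (\<integral>\<omega>. Y \<omega> ^ (n - a + L) \<partial>M))"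
  by (simp only: egf_coeff_mult[of A] egf_coeff_deriv_iterate egf_coeff_mgf_fps)

lemma fps_nth_deriv_mult:
  fixes f g :: "'a::comm_ring_1 fps"
  shows "fps_nth_deriv m (f * g) =
    (\<Sum>j\<le>m. of_nat (m choose j) * fps_nth_deriv j f * fps_nth_deriv (m - j) g)"
proof (induction m)
  case 0
  then show ?case by simp
next
  case (Suc m)
  have shift: "(\<Sum>j\<le>m. of_nat (m choose j) * fps_nth_deriv j f * fps_nth_deriv (Suc m - j) g) =
      f * fps_nth_deriv (Suc m) g +
      (\<Sum>j\<le>m. of_nat (m choose Suc j) * fps_nth_deriv (Suc j) f * fps_nth_deriv (m - j) g)"
  proof -
    have "(\<Sum>j\<le>m. of_nat (m choose j) * fps_nth_deriv j f * fps_nth_deriv (Suc m - j) g) =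
        (\<Sum>j\<le>Suc m. of_nat (m choose j) * fps_nth_deriv j f * fps_nth_deriv (Suc m - j) g)"
      by (simp add: binomial_eq_0)
    then show ?thesis
      by (simp only: sum.atMost_Suc_shift) simp
  qed
  have "fps_nth_deriv (Suc m) (f * g) =
      (\<Sum>j\<le>m. of_nat (m choose j) * fps_nth_deriv (Suc j) f * fps_nth_deriv (m - j) g)
    + (\<Sum>j\<le>m. of_nat (m choose j) * fps_nth_deriv j f * fps_nth_deriv (Suc m - j) g)"
    by (simp add: Suc fps_deriv_sum sum.distrib Suc_diff_le algebra_simps)
  also have "\<dots> = f * fps_nth_deriv (Suc m) g +
      (\<Sum>j\<le>m. of_nat ((m choose j) + (m choose Suc j)) *
        fps_nth_deriv (Suc j) f * fps_nth_deriv (m - j) g)"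
    unfolding shift by (simp add: sum.distrib algebra_simps)
  also have "\<dots> =
      (\<Sum>j\<le>Suc m. of_nat (Suc m choose j) * fps_nth_deriv j f * fps_nth_deriv (Suc m - j) g)"
    by (simp only: sum.atMost_Suc_shift) simp
  finally show ?case .
qed

lemma fps_nth_deriv_mult_exp:
  fixes f :: "'a::field_char_0 fps"
  shows "fps_nth_deriv m (f * fps_exp c) =
    (\<Sum>j\<le>m. fps_const (of_nat (m choose j) * c ^ (m - j)) * fps_nth_deriv j f) * fps_exp c"
  unfolding fps_nth_deriv_mult sum_distrib_right
  by (simp add: mult_ac flip: fps_of_nat fps_const_mult)

lemma finite_comps: "finite (comps k j)"
  unfolding comps_def by (rule finite_subset[of _ "{1..k} \<rightarrow>\<^sub>E {1..j}"]) (auto intro: finite_PiE)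

lemma comps_0: "comps 0 j = (if j = 0 then {\<lambda>_. undefined} else {})"
  unfolding comps_def by auto

lemma comps_eq_empty:
  assumes "j < k"
  shows "comps k j = {}"
proof -
  have "k \<le> j" if l: "l \<in> comps k j" for l
  proof -
    have "(\<Sum>p\<in>{1..k}. 1) \<le> (\<Sum>p\<in>{1..k}. l p)"
      using l unfolding comps_def by (intro sum_mono) (auto simp: PiE_def Pi_def)
    then show ?thesis
      using l unfolding comps_def by simp
  qed
  then show ?thesis
    using assms by fastforce
qed

lemma bij_betw_comps_Suc:
  "bij_betw (\<lambda>(a, l). l(Suc k := a)) (SIGMA a:{1..j}. comps k (j - a)) (comps (Suc k) j)"
proof (rule bij_betw_byWitness[where f' = "\<lambda>l. (l (Suc k), l(Suc k := undefined))"])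
  have ivl: "{1..Suc k} = insert (Suc k) {1..k}"
    by auto
  show "(\<lambda>(a, l). l(Suc k := a)) ` (SIGMA a:{1..j}. comps k (j - a)) \<subseteq> comps (Suc k) j"
  proof clarify
    fix a l assume a: "a \<in> {1..j}" and l: "l \<in> comps k (j - a)"
    have "(\<Sum>p\<in>{1..k}. (l(Suc k := a)) p) = (\<Sum>p\<in>{1..k}. l p)"
      by (rule sum.cong) auto
    then show "l(Suc k := a) \<in> comps (Suc k) j"
      using a l unfolding comps_def ivl by (auto simp: PiE_def Pi_def extensional_def)
  qed
  show "(\<lambda>l. (l (Suc k), l(Suc k := undefined))) ` comps (Suc k) j \<subseteq>
      (SIGMA a:{1..j}. comps k (j - a))"
  proof clarify
    fix l assume l: "l \<in> comps (Suc k) j"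
    have "(\<Sum>p\<in>{1..k}. (l(Suc k := undefined)) p) = (\<Sum>p\<in>{1..k}. l p)"
      by (rule sum.cong) auto
    moreover have "l p \<le> (\<Sum>p\<in>{1..k}. l p)" if "p \<in> {1..k}" for p
      using that by (intro member_le_sum) auto
    ultimately show "l (Suc k) \<in> {1..j} \<and> l(Suc k := undefined) \<in> comps k (j - l (Suc k))"
      using l unfolding comps_def ivl by (auto simp: PiE_def Pi_def extensional_def)
  qed
qed (auto simp: comps_def PiE_def extensional_def)

lemma prod_atLeast1_atMost_Suc_upd:
  "(\<Prod>p\<in>{1..Suc k}. g ((l(Suc k := a)) p)) = g a * (\<Prod>p\<in>{1..k}. g (l p))"
proof -
  have "(\<Prod>p\<in>{1..k}. g ((l(Suc k := a)) p)) = (\<Prod>p\<in>{1..k}. g (l p))"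
    by (rule prod.cong) auto
  then show ?thesis
    by (simp add: mult.commute)
qed

lemma multinom_Suc:
  assumes "a \<le> j"
  shows "multinom j (Suc k) (l(Suc k := a)) = of_nat (j choose a) * multinom (j - a) k l"
proof -
  have "(\<Prod>p\<in>{1..k}. fact (l p) :: real) \<noteq> 0"
    by (simp add: prod_zero_iff)
  then show ?thesis
    unfolding multinom_def prod_atLeast1_atMost_Suc_upd binomial_fact[OF assms]
    by (simp add: field_simps)
qed

(* k! times the partial Bell polynomial B_{j,k}(F', F'', ...), i.e. the coefficient of
   s^j / j! in (F(t + s) - F(t))^k *)
definition composition_sum :: "real fps \<Rightarrow> nat \<Rightarrow> nat \<Rightarrow> real fps" where
  "composition_sum F k j =
    (\<Sum>l\<in>comps k j. fps_const (multinom j k l) * (\<Prod>p\<in>{1..k}. fps_nth_deriv (l p) F))"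

lemma composition_sum_0: "composition_sum F 0 j = (if j = 0 then 1 else 0)"
  by (simp add: composition_sum_def comps_0 multinom_def)

lemma composition_sum_eq_0: "j < k \<Longrightarrow> composition_sum F k j = 0"
  by (simp add: composition_sum_def comps_eq_empty)

lemma composition_sum_Suc:
  "composition_sum F (Suc k) j =
    (\<Sum>a=1..j. of_nat (j choose a) * fps_nth_deriv a F * composition_sum F k (j - a))"
proof -
  have "composition_sum F (Suc k) j = (\<Sum>(a, l)\<in>(SIGMA a:{1..j}. comps k (j - a)).
      fps_const (multinom j (Suc k) (l(Suc k := a))) *
      (\<Prod>p\<in>{1..Suc k}. fps_nth_deriv ((l(Suc k := a)) p) F))"
    unfolding composition_sum_def
    by (subst sum.reindex_bij_betw[OF bij_betw_comps_Suc, symmetric]) (simp add: case_prod_unfold)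
  also have "\<dots> = (\<Sum>a=1..j. \<Sum>l\<in>comps k (j - a).
      fps_const (multinom j (Suc k) (l(Suc k := a))) *
      (\<Prod>p\<in>{1..Suc k}. fps_nth_deriv ((l(Suc k := a)) p) F))"
    by (rule sum.Sigma[symmetric]) (auto simp: finite_comps)
  also have "\<dots> = (\<Sum>a=1..j. \<Sum>l\<in>comps k (j - a). of_nat (j choose a) * fps_nth_deriv a F *
      (fps_const (multinom (j - a) k l) * (\<Prod>p\<in>{1..k}. fps_nth_deriv (l p) F)))"
    by (intro sum.cong refl)
      (simp add: prod_atLeast1_atMost_Suc_upd multinom_Suc mult_ac flip: fps_of_nat fps_const_mult)
  finally show ?thesis
    by (simp add: composition_sum_def sum_distrib_left)
qed

lemma fps_deriv_composition_sum:
  "fps_deriv (composition_sum F k j) =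
    composition_sum F k (Suc j) - of_nat k * fps_deriv F * composition_sum F (k - 1) j"
proof (induction k arbitrary: j)
  case 0
  then show ?case
    by (simp add: composition_sum_0)
next
  case (Suc k)
  let ?Q = "composition_sum F" and ?D = "\<lambda>b. fps_nth_deriv b F"
  let ?C = "\<lambda>b. of_nat (j choose Suc b) :: real fps"
  have rec: "?Q (Suc i) j' = (\<Sum>b<j'. of_nat (j' choose Suc b) * ?D (Suc b) * ?Q i (j' - Suc b))"
    for i j'
    by (simp add: composition_sum_Suc sum.atLeast1_atMost_eq)
  have k_Q: "of_nat k * (\<Sum>b<j. ?C b * ?D (Suc b) * ?Q (k - 1) (j - Suc b)) = of_nat k * ?Q k j"
    by (cases k) (simp_all add: rec)
  have "fps_deriv (?Q (Suc k) j) =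
      (\<Sum>b<j. ?C b * ?D (Suc (Suc b)) * ?Q k (j - Suc b))
    + (\<Sum>b<j. ?C b * ?D (Suc b) * ?Q k (Suc (j - Suc b)))
    - fps_deriv F * (of_nat k * (\<Sum>b<j. ?C b * ?D (Suc b) * ?Q (k - 1) (j - Suc b)))"
    by (simp add: rec fps_deriv_sum Suc.IH algebra_simps sum.distrib sum_subtractf
        sum_distrib_left)
  also have "\<dots> =
      (\<Sum>b<j. ?C b * ?D (Suc (Suc b)) * ?Q k (j - Suc b))
    + (\<Sum>b<j. ?C b * ?D (Suc b) * ?Q k (Suc (j - Suc b)))
    - fps_deriv F * (of_nat k * ?Q k j)"
    by (simp only: k_Q)
  also have "\<dots> = ?Q (Suc k) (Suc j) - of_nat (Suc k) * fps_deriv F * ?Q k j"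
  proof -
    have "?Q (Suc k) (Suc j) =
        (\<Sum>b<Suc j. of_nat (j choose b) * ?D (Suc b) * ?Q k (j - b))
      + (\<Sum>b<Suc j. ?C b * ?D (Suc b) * ?Q k (j - b))"
      by (simp add: rec sum.distrib algebra_simps)
    also have "(\<Sum>b<Suc j. of_nat (j choose b) * ?D (Suc b) * ?Q k (j - b)) =
        fps_deriv F * ?Q k j + (\<Sum>b<j. ?C b * ?D (Suc (Suc b)) * ?Q k (j - Suc b))"
      by (subst sum.lessThan_Suc_shift) simp
    also have "(\<Sum>b<Suc j. ?C b * ?D (Suc b) * ?Q k (j - b)) =
        (\<Sum>b<j. ?C b * ?D (Suc b) * ?Q k (Suc (j - Suc b)))"
      by (simp add: Suc_diff_Suc)
    finally show ?thesis
      by (simp add: algebra_simps)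
  qed
  finally show ?case
    by simp
qed

lemma fps_deriv_fps_binomial:
  "fps_deriv (fps_binomial c) = fps_const c * fps_binomial (c - 1)"
  by (simp add: fps_eq_iff gbinomial_absorption[symmetric] del: of_nat_Suc)

definition binomial_power :: "'a::field_char_0 fps \<Rightarrow> 'a \<Rightarrow> 'a \<Rightarrow> 'a fps" where
  "binomial_power F x y = fps_binomial x oo (fps_const y * (F - 1))"

lemma fps_deriv_binomial_power:
  assumes "fps_nth F 0 = 1"
  shows "fps_deriv (binomial_power F x y) =
    fps_const (x * y) * binomial_power F (x - 1) y * fps_deriv F"
proof -
  have G0: "fps_nth (fps_const y * (F - 1)) 0 = 0"
    using assms by simp
  show ?thesis
    unfolding binomial_power_def fps_compose_deriv[OF G0] fps_deriv_fps_binomial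
      fps_compose_mult_distrib[OF G0]
    by (simp add: algebra_simps)
qed

lemma gbinomial_Suc_mult: "of_nat (Suc k) * (a gchoose Suc k) = (a - of_nat k) * (a gchoose k)"
  by (simp only: gbinomial_absorption gbinomial_absorb_comp)

lemma fps_nth_deriv_binomial_power:
  fixes F :: "real fps"
  assumes F0: "fps_nth F 0 = 1"
  shows "fps_nth_deriv j (binomial_power F x y) =
    (\<Sum>k\<le>j. fps_const ((x gchoose k) * y ^ k) * binomial_power F (x - of_nat k) y *
      composition_sum F k j)"
proof (induction j)
  case 0
  then show ?case
    by (simp add: composition_sum_0)
next
  case (Suc j)
  let ?c = "\<lambda>k. fps_const ((x gchoose k) * y ^ k)"
  let ?P = "\<lambda>k. binomial_power F (x - of_nat k) y" and ?Q = "composition_sum F"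
  define T where
    "T k = ?c k * fps_const ((x - of_nat k) * y) * fps_deriv F * ?P (Suc k) * ?Q k j" for k
  define U where "U k = ?c k * of_nat k * fps_deriv F * ?P k * ?Q (k - 1) j" for k
  have deriv_term: "fps_deriv (?c k * ?P k * ?Q k j) = ?c k * ?P k * ?Q k (Suc j) + T k - U k" for k
  proof -
    have "fps_deriv (?P k) = fps_const ((x - of_nat k) * y) * ?P (Suc k) * fps_deriv F"
      using fps_deriv_binomial_power[OF F0, of "x - of_nat k" y] by (simp add: algebra_simps)
    then show ?thesis
      by (simp add: T_def U_def fps_deriv_composition_sum algebra_simps)
  qed
  have U_shift: "U (Suc k) = T k" for k
  proof -
    have "of_nat (Suc k) * ((x gchoose Suc k) * y ^ Suc k) =
        (x gchoose k) * y ^ k * ((x - of_nat k) * y)"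
      by (simp only: mult.assoc[symmetric] gbinomial_Suc_mult) (simp add: algebra_simps)
    then have "of_nat (Suc k) * ?c (Suc k) = ?c k * fps_const ((x - of_nat k) * y)"
      by (simp only: fps_of_nat[symmetric] fps_const_mult)
    then show ?thesis
      unfolding T_def U_def by (simp add: algebra_simps)
  qed
  have "fps_nth_deriv (Suc j) (binomial_power F x y) =
      fps_deriv (\<Sum>k\<le>Suc j. ?c k * ?P k * ?Q k j)"
    by (simp add: Suc composition_sum_eq_0)
  also have "\<dots> = (\<Sum>k\<le>Suc j. ?c k * ?P k * ?Q k (Suc j)) +
      (\<Sum>k\<le>Suc j. T k) - (\<Sum>k\<le>Suc j. U k)"
    by (simp only: fps_deriv_sum deriv_term sum.distrib sum_subtractf)
  also have "(\<Sum>k\<le>Suc j. U k) = (\<Sum>k\<le>j. T k)"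
    by (simp only: sum.atMost_Suc_shift U_shift) (simp add: U_def)
  also have "(\<Sum>k\<le>Suc j. T k) = (\<Sum>k\<le>j. T k)"
    by (simp add: T_def composition_sum_eq_0)
  finally show ?case
    by simp
qed

lemma fps_nth_deriv_binomial_power_mult_exp:
  fixes F :: "real fps"
  assumes "fps_nth F 0 = 1"
  shows "fps_nth_deriv m (binomial_power F x y * fps_exp c) =
    (\<Sum>k\<le>m. \<Sum>j=k..m. fps_const ((x gchoose k) * y ^ k * of_nat (m choose j) * c ^ (m - j)) *
        binomial_power F (x - of_nat k) y * (composition_sum F k j * fps_exp c))"
proof -
  let ?t = "\<lambda>k j. fps_const ((x gchoose k) * y ^ k * of_nat (m choose j) * c ^ (m - j)) *
        binomial_power F (x - of_nat k) y * (composition_sum F k j * fps_exp c)"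
  have "fps_nth_deriv j (binomial_power F x y) = (\<Sum>k\<le>m. fps_const ((x gchoose k) * y ^ k) *
      binomial_power F (x - of_nat k) y * composition_sum F k j)" if "j \<le> m" for j
    unfolding fps_nth_deriv_binomial_power[OF assms]
    using that by (intro sum.mono_neutral_left) (auto simp: composition_sum_eq_0)
  then have "fps_nth_deriv m (binomial_power F x y * fps_exp c) =
      (\<Sum>j\<le>m. fps_const (of_nat (m choose j) * c ^ (m - j)) *
        (\<Sum>k\<le>m. fps_const ((x gchoose k) * y ^ k) *
          binomial_power F (x - of_nat k) y * composition_sum F k j)) * fps_exp c"
    unfolding fps_nth_deriv_mult_exp by (intro arg_cong2[where f = "(*)"] sum.cong) auto
  also have "\<dots> = (\<Sum>j\<le>m. \<Sum>k\<le>m. ?t k j)"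
    unfolding sum_distrib_left sum_distrib_right
    by (intro sum.cong refl) (simp add: mult_ac flip: fps_const_mult)
  also have "\<dots> = (\<Sum>k\<le>m. \<Sum>j\<le>m. ?t k j)"
    by (rule sum.swap)
  also have "\<dots> = (\<Sum>k\<le>m. \<Sum>j=k..m. ?t k j)"
    by (intro sum.cong refl sum.mono_neutral_right) (auto simp: composition_sum_eq_0)
  finally show ?thesis .
qed

lemma power_div_fact_le_exp:
  fixes z :: real
  assumes "z \<ge> 0"
  shows "z ^ n / fact n \<le> exp z"
proof -
  have "(\<Sum>k\<in>{n}. z ^ k /\<^sub>R fact k) \<le> (\<Sum>k. z ^ k /\<^sub>R fact k)"
    using exp_converges[of z] assms by (intro sum_le_suminf) (auto simp: sums_iff)
  then show ?thesis
    by (simp add: exp_def divide_inverse mult.commute)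
qed

lemma integrable_power_if_integrable_exp:
  fixes X :: "'a \<Rightarrow> real"
  assumes X: "X \<in> borel_measurable M" and t: "t > 0"
    and exp_pos: "integrable M (\<lambda>\<omega>. exp (t * X \<omega>))"
    and exp_neg: "integrable M (\<lambda>\<omega>. exp (- t * X \<omega>))"
  shows "integrable M (\<lambda>\<omega>. X \<omega> ^ n)"
proof (rule Bochner_Integration.integrable_bound)
  show "integrable M (\<lambda>\<omega>. fact n / t ^ n * (exp (t * X \<omega>) + exp (- t * X \<omega>)))"
    using exp_pos exp_neg by auto
  show "(\<lambda>\<omega>. X \<omega> ^ n) \<in> borel_measurable M"
    using X by measurable
  show "AE \<omega> in M. norm (X \<omega> ^ n) \<le> norm (fact n / t ^ n * (exp (t * X \<omega>) + exp (- t * X \<omega>)))"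
  proof (rule AE_I2)
    fix \<omega>
    have "(t * \<bar>X \<omega>\<bar>) ^ n / fact n \<le> exp (t * \<bar>X \<omega>\<bar>)"
      using t by (intro power_div_fact_le_exp) auto
    also have "exp (t * \<bar>X \<omega>\<bar>) \<le> exp (t * X \<omega>) + exp (- t * X \<omega>)"
      by (cases "X \<omega> \<ge> 0") (auto simp: add_increasing add_increasing2)
    finally show "norm (X \<omega> ^ n) \<le> norm (fact n / t ^ n * (exp (t * X \<omega>) + exp (- t * X \<omega>)))"
      using t by (simp add: power_abs power_mult_distrib field_simps)
  qed
qed

lemma prod_insert_fun_upd:
  assumes "finite J" "q \<notin> J"
  shows "(\<Prod>p\<in>insert q J. g p ((b(q := e)) p)) = g q e * (\<Prod>p\<in>J. g p (b p))"
proof -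
  have "(\<Prod>p\<in>J. g p ((b(q := e)) p)) = (\<Prod>p\<in>J. g p (b p))"
    using assms(2) by (intro prod.cong) auto
  then show ?thesis
    using assms by simp
qed

locale iid_copies = prob_space +
  fixes Y :: "'a \<Rightarrow> real" and Ys :: "nat \<Rightarrow> 'a \<Rightarrow> real"
  assumes measurable_Y: "Y \<in> borel_measurable M"
    and integrable_moments: "\<And>n. integrable M (\<lambda>\<omega>. Y \<omega> ^ n)"
    and indep_Ys: "indep_vars (\<lambda>_. borel) Ys {1..}"
    and distr_Ys: "\<And>p. p \<ge> 1 \<Longrightarrow> distr M borel (Ys p) = distr M borel Y"
begin

lemma
  assumes "p \<ge> 1"
  shows integrable_Ys_power: "integrable M (\<lambda>\<omega>. Ys p \<omega> ^ n)"
    and integral_Ys_power: "(\<integral>\<omega>. Ys p \<omega> ^ n \<partial>M) = (\<integral>\<omega>. Y \<omega> ^ n \<partial>M)"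
proof -
  have Ys: "Ys p \<in> borel_measurable M"
    using indep_Ys assms unfolding indep_vars_def by auto
  have power: "(\<lambda>z::real. z ^ n) \<in> borel_measurable borel"
    by measurable
  show "integrable M (\<lambda>\<omega>. Ys p \<omega> ^ n)"
    using integrable_distr_eq[OF Ys power] integrable_distr_eq[OF measurable_Y power]
      integrable_moments distr_Ys[OF assms] by simp
  show "(\<integral>\<omega>. Ys p \<omega> ^ n \<partial>M) = (\<integral>\<omega>. Y \<omega> ^ n \<partial>M)"
    using integral_distr[OF Ys power] integral_distr[OF measurable_Y power] distr_Ys[OF assms]
    by simp
qed

lemma
  assumes "finite J" "J \<subseteq> {1..}"
  shows integrable_prod_Ys_power: "integrable M (\<lambda>\<omega>. \<Prod>p\<in>J. Ys p \<omega> ^ b p)"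
    and integral_prod_Ys_power: "(\<integral>\<omega>. (\<Prod>p\<in>J. Ys p \<omega> ^ b p) \<partial>M) = (\<Prod>p\<in>J. \<integral>\<omega>. Y \<omega> ^ b p \<partial>M)"
proof -
  have "indep_vars (\<lambda>_. borel) (\<lambda>p \<omega>. Ys p \<omega> ^ b p) {1..}"
    by (rule indep_vars_compose2[OF indep_Ys]) measurable
  then have indep: "indep_vars (\<lambda>_. borel) (\<lambda>p \<omega>. Ys p \<omega> ^ b p) J"
    using indep_vars_subset assms(2) by blast
  have integrable: "\<And>p. p \<in> J \<Longrightarrow> integrable M (\<lambda>\<omega>. Ys p \<omega> ^ b p)"
    using integrable_Ys_power assms(2) by auto
  show "integrable M (\<lambda>\<omega>. \<Prod>p\<in>J. Ys p \<omega> ^ b p)"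
    by (rule indep_vars_integrable[OF assms(1) indep integrable])
  have "(\<integral>\<omega>. (\<Prod>p\<in>J. Ys p \<omega> ^ b p) \<partial>M) = (\<Prod>p\<in>J. \<integral>\<omega>. Ys p \<omega> ^ b p \<partial>M)"
    by (rule indep_vars_lebesgue_integral[OF assms(1) indep integrable])
  also have "\<dots> = (\<Prod>p\<in>J. \<integral>\<omega>. Y \<omega> ^ b p \<partial>M)"
    using integral_Ys_power assms(2) by (intro prod.cong) auto
  finally show "(\<integral>\<omega>. (\<Prod>p\<in>J. Ys p \<omega> ^ b p) \<partial>M) = (\<Prod>p\<in>J. \<integral>\<omega>. Y \<omega> ^ b p \<partial>M)" .
qed

lemma integral_shifted_sum_power_prod:
  assumes "finite J" "J \<subseteq> {Suc k..}"
  shows "integrable M (\<lambda>\<omega>. ((\<Sum>p\<in>{1..k}. Ys p \<omega>) + c) ^ n * (\<Prod>p\<in>{1..k}. Ys p \<omega> ^ l p)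
            * (\<Prod>p\<in>J. Ys p \<omega> ^ b p)) \<and>
    (\<integral>\<omega>. ((\<Sum>p\<in>{1..k}. Ys p \<omega>) + c) ^ n * (\<Prod>p\<in>{1..k}. Ys p \<omega> ^ l p)
            * (\<Prod>p\<in>J. Ys p \<omega> ^ b p) \<partial>M) =
    egf_coeff ((\<Prod>p\<in>{1..k}. fps_nth_deriv (l p) (mgf_fps M Y)) * fps_exp c) n
      * (\<Prod>p\<in>J. \<integral>\<omega>. Y \<omega> ^ b p \<partial>M)"
  \<comment> \<open>The factor over \<open>J\<close> absorbs the powers of \<open>Ys (Suc k)\<close> that arise when
  \<open>(S\<^sub>k + Ys (Suc k) + c)\<^sup>n\<close> is expanded in the induction step.\<close>
  using assms
proof (induction k arbitrary: J b n)
  case 0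
  then have "J \<subseteq> {1..}"
    by auto
  with 0 show ?case
    using integrable_prod_Ys_power integral_prod_Ys_power by simp
next
  case (Suc k)
  let ?S = "\<lambda>\<omega>. (\<Sum>p\<in>{1..k}. Ys p \<omega>) + c"
  let ?P = "\<lambda>\<omega>. \<Prod>p\<in>{1..k}. Ys p \<omega> ^ l p"
  let ?A = "(\<Prod>p\<in>{1..k}. fps_nth_deriv (l p) (mgf_fps M Y)) * fps_exp c"
  let ?L = "l (Suc k)"
  define f where "f a \<omega> = ?S \<omega> ^ a * ?P \<omega> *
    (\<Prod>p\<in>insert (Suc k) J. Ys p \<omega> ^ (b(Suc k := n - a + ?L)) p)" for a \<omega>
  have J: "finite (insert (Suc k) J)" "insert (Suc k) J \<subseteq> {Suc k..}" "Suc k \<notin> J"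
    using Suc.prems by auto
  have f: "f a \<omega> =
      ?S \<omega> ^ a * ?P \<omega> * (Ys (Suc k) \<omega> ^ (n - a + ?L) * (\<Prod>p\<in>J. Ys p \<omega> ^ b p))" for a \<omega>
    unfolding f_def using prod_insert_fun_upd[OF Suc.prems(1) J(3), of "\<lambda>p e. Ys p \<omega> ^ e"]
    by simp
  have IH: "integrable M (f a)" "integral\<^sup>L M (f a) = egf_coeff ?A a *
      ((\<integral>\<omega>. Y \<omega> ^ (n - a + ?L) \<partial>M) * (\<Prod>p\<in>J. \<integral>\<omega>. Y \<omega> ^ b p \<partial>M))" for a
    using Suc.IH[OF J(1,2), of a "b(Suc k := n - a + ?L)"]
      prod_insert_fun_upd[OF Suc.prems(1) J(3), of "\<lambda>_ e. \<integral>\<omega>. Y \<omega> ^ e \<partial>M"]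
    unfolding f_def by auto
  have expand: "((\<Sum>p\<in>{1..Suc k}. Ys p \<omega>) + c) ^ n * (\<Prod>p\<in>{1..Suc k}. Ys p \<omega> ^ l p)
      * (\<Prod>p\<in>J. Ys p \<omega> ^ b p) = (\<Sum>a\<le>n. of_nat (n choose a) * f a \<omega>)" for \<omega>
  proof -
    have binom: "((\<Sum>p\<in>{1..Suc k}. Ys p \<omega>) + c) ^ n =
        (\<Sum>a\<le>n. of_nat (n choose a) * ?S \<omega> ^ a * Ys (Suc k) \<omega> ^ (n - a))"
      using binomial_ring[of "?S \<omega>" "Ys (Suc k) \<omega>" n] by (simp add: add_ac)
    show ?thesis
      unfolding binom f sum_distrib_right power_add by (intro sum.cong refl) (simp add: mult_ac)
  qed
  have "(\<Prod>p\<in>{1..Suc k}. fps_nth_deriv (l p) (mgf_fps M Y)) * fps_exp c =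
      ?A * fps_nth_deriv ?L (mgf_fps M Y)"
    by (simp add: mult_ac)
  note egf = this[THEN arg_cong[where f = "\<lambda>f. egf_coeff f n"], unfolded egf_coeff_mult_deriv_mgf_fps]
  have "(\<integral>\<omega>. (\<Sum>a\<le>n. of_nat (n choose a) * f a \<omega>) \<partial>M) =
      (\<Sum>a\<le>n. of_nat (n choose a) * integral\<^sup>L M (f a))"
    using IH(1) by simp
  then show ?case
    unfolding expand egf using IH by (simp add: sum_distrib_left sum_distrib_right mult_ac)
qed

lemma egf_coeff_composition_sum_mgf_mult_exp:
  "egf_coeff (composition_sum (mgf_fps M Y) k j * fps_exp c) n =
    (\<Sum>l\<in>comps k j. multinom j k l *
       (\<integral>\<omega>. ((\<Sum>p\<in>{1..k}. Ys p \<omega>) + c) ^ n * (\<Prod>p\<in>{1..k}. Ys p \<omega> ^ l p) \<partial>M))"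
  using integral_shifted_sum_power_prod[of "{}" k c n]
  by (simp add: composition_sum_def sum_distrib_right egf_coeff_sum mult.assoc)

lemma phi_r_add_eq:
  "phi_r M Y r (m + n) x y =
    (\<Sum>k\<le>m. \<Sum>j=k..m. \<Sum>i\<le>n.
      (x gchoose k) * y ^ k * of_nat (m choose j) * real r ^ (m - j) *
      (of_nat (n choose i) * phi M Y i (x - real k) y *
        (\<Sum>l\<in>comps k j. multinom j k l *
           (\<integral>\<omega>. ((\<Sum>p\<in>{1..k}. Ys p \<omega>) + real r) ^ (n - i) *
             (\<Prod>p\<in>{1..k}. Ys p \<omega> ^ l p) \<partial>M))))"
proof -
  let ?F = "mgf_fps M Y" and ?E = "fps_exp (real r)"
  have F0: "fps_nth ?F 0 = 1"
    by (simp add: mgf_fps_def prob_space)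
  have phi: "phi M Y i z y = egf_coeff (binomial_power ?F z y) i" for i z
    by (simp add: phi_def phi_fps_def binomial_power_def egf_coeff_def)
  have "phi_r M Y r (m + n) x y = egf_coeff (fps_nth_deriv m (binomial_power ?F x y * ?E)) n"
    by (simp add: phi_r_def phi_fps_def binomial_power_def egf_coeff_deriv_iterate add.commute
        flip: egf_coeff_def)
  then show ?thesis
    unfolding fps_nth_deriv_binomial_power_mult_exp[OF F0] egf_coeff_sum mult.assoc
      egf_coeff_const_mult egf_coeff_mult[of "binomial_power ?F _ y"] phi
      egf_coeff_composition_sum_mgf_mult_exp
    by (simp add: sum_distrib_left mult.assoc)
qed

end

lemma iid_copies_if_exp_integrable:
  assumes "prob_space M" "Y \<in> borel_measurable M" "r0 > 0"
    and "\<And>t. \<bar>t\<bar> < r0 \<Longrightarrow> integrable M (\<lambda>\<omega>. exp (t * Y \<omega>))"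
    and "prob_space.indep_vars M (\<lambda>_. borel) Ys {1..}"
    and "\<And>p. p \<ge> 1 \<Longrightarrow> distr M borel (Ys p) = distr M borel Y"
  shows "iid_copies M Y Ys"
proof -
  have "integrable M (\<lambda>\<omega>. Y \<omega> ^ n)" for n
    using assms(2,3) assms(4)[of "r0 / 2"] assms(4)[of "- (r0 / 2)"]
    by (intro integrable_power_if_integrable_exp[of _ _ "r0 / 2"]) auto
  then show ?thesis
    using assms by (simp add: iid_copies_def iid_copies_axioms_def)
qed

lemma falling_fact_eq_fact_mult_gchoose: "falling_fact k x = fact k * (x gchoose k)"
  by (simp add: falling_fact_def gbinomial_mult_fact atLeast0LessThan)

theorem theorem2p5:
  fixes M :: "'a measure" and Y :: "'a \<Rightarrow> real" and Ys :: "nat \<Rightarrow> 'a \<Rightarrow> real"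
    and r0 :: real and r m n :: nat and x y :: real
  assumes "prob_space M"
    and "Y \<in> borel_measurable M"
    and "r0 > 0"
    and "\<And>t. \<bar>t\<bar> < r0 \<Longrightarrow> integrable M (\<lambda>\<omega>. exp (t * Y \<omega>))"
    and "prob_space.indep_vars M (\<lambda>_. borel) Ys {1..}"
    and "\<And>j. j \<ge> 1 \<Longrightarrow> distr M borel (Ys j) = distr M borel Y"
    and "r > 0"
  shows "phi_r M Y r (m + n) x y =
    (\<Sum>i=0..n. \<Sum>k=0..m. (1 / fact k) * real (n choose i) * falling_fact k x * y ^ k
        * phi M Y i (x - real k) y
        * (\<Sum>j=k..m. real (m choose j) *
             (\<Sum>l\<in>comps k j. multinom j k l *
                (\<integral>\<omega>. ((\<Sum>p\<in>{1..k}. Ys p \<omega>) + real r) ^ (n - i)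
                        * (\<Prod>p\<in>{1..k}. (Ys p \<omega>) ^ (l p)) \<partial>M))
             * real r ^ (m - j)))"
proof -
  \<comment> \<open>The identity also holds for \<open>r = 0\<close>.\<close>
  interpret iid_copies M Y Ys
    using assms(1-6) by (rule iid_copies_if_exp_integrable)
  define S where "S k j i = (\<Sum>l\<in>comps k j. multinom j k l *
    (\<integral>\<omega>. ((\<Sum>p\<in>{1..k}. Ys p \<omega>) + real r) ^ (n - i) *
      (\<Prod>p\<in>{1..k}. Ys p \<omega> ^ l p) \<partial>M))" for k j i
  define T where "T i k j = (x gchoose k) * y ^ k * of_nat (m choose j) * real r ^ (m - j) *
    (of_nat (n choose i) * phi M Y i (x - real k) y * S k j i)" for i k j
  have "phi_r M Y r (m + n) x y = (\<Sum>k\<le>m. \<Sum>j=k..m. \<Sum>i\<le>n. T i k j)"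
    unfolding phi_r_add_eq T_def S_def ..
  also have "\<dots> = (\<Sum>i\<le>n. \<Sum>k\<le>m. \<Sum>j=k..m. T i k j)"
    by (subst sum.swap) (simp add: sum.swap[of _ "{_.._}"])
  also have "\<dots> = (\<Sum>i=0..n. \<Sum>k=0..m.
      (1 / fact k) * real (n choose i) * falling_fact k x * y ^ k * phi M Y i (x - real k) y *
      (\<Sum>j=k..m. real (m choose j) * S k j i * real r ^ (m - j)))"
  proof -
    have gchoose: "1 / fact k * a * falling_fact k x = a * (x gchoose k)" for k a
      by (simp add: falling_fact_eq_fact_mult_gchoose)
    show ?thesis
      unfolding atLeast0AtMost T_def gchoose by (simp add: sum_distrib_left mult_ac)
  qed
  finally show ?thesis
    unfolding S_def .
qed

end
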